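(* Let $\mathrm{k}\ge1$ and let $a_j$ ($0\le j\le\mathrm{k}-1$), $b_j$ ($0\le j\le\mathrm{k}$), $c_j$ ($0\le j\le\mathrm{k}-1$) be real coefficients with $a_0,b_0,c_0>0$ of a zero-stable $\mathrm{k}$-step IEMS method, extended by $a_j=c_j=0$ for $j\ge\mathrm{k}$ and $b_j=0$ for $j\ge\mathrm{k}+1$. With $a(\theta)=\sum_{j=0}^{\mathrm{k}-1}a_je^{\imath j\theta}$, $b(\theta)=\sum_{j=0}^{\mathrm{k}}b_je^{\imath j\theta}$, $c(\theta)=\sum_{j=0}^{\mathrm{k}-1}c_je^{\imath j\theta}$, assume there exist positive finite constants $$\sigma_{\mathrm{F}}=\max_{\theta\in[0,2\pi)}\Big|\frac1{a(\theta)}\Big|,\quad\sigma_{\mathrm{E}}=\max_{\theta\in[0,2\pi)}\Big|\frac{c(\theta)}{a(\theta)}\Big|,\quad\lambda_{\mathrm{I}}=\min_{\theta\in[0,2\pi)}\Re\Big[\frac{b(\theta)}{a(\theta)}\Big].$$ Then for every $n\ge1$ the spectral norms of the $n\times n$ lower triangular Toeplitz matrices $A_L^{-1}$ and $A_L^{-1}C_L$ are bounded by $\sigma_{\mathrm{F}}$ and $\sigma_{\mathrm{E}}$, respectively, and all eigenvalues of $\frac12\big(A_L^{-1}B_L+(A_L^{-1}B_L)^T\big)$ are bounded below by $\lambda_{\mathrm{I}}$. Moreover, for any real sequences $\{v^i\}_{i\ge1}$, $\{u^i\}_{i\ge1}$ and every $n\ge1$: (i) $\sum_{i=1}^n\sum_{j=1}^i\hat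 b_{i-j}v^jv^i\ge\lambda_{\mathrm{I}}\sum_{i=1}^n|v^i|^2$; (ii) $\sum_{i=1}^n\sum_{j=1}^i a^{(-1)}_{i-j}v^ju^i\le\sigma_{\mathrm{F}}\sqrt{\sum_{i=1}^n|v^i|^2}\sqrt{\sum_{i=1}^n|u^i|^2}$; (iii) $\sum_{i=1}^n\sum_{j=1}^i\hat c_{i-j}v^ju^i\le\sigma_{\mathrm{E}}\sqrt{\sum_{i=1}^n|v^i|^2}\sqrt{\sum_{i=1}^n|u^i|^2}$.
   Context: $A_L$, $B_L$, $C_L$ denote the $n\times n$ lower triangular Toeplitz matrices with $(i,j)$ entry $a_{i-j}$, $b_{i-j}$, $c_{i-j}$ respectively for $i\ge j$ (zero above the diagonal). The DOC kernels $a^{(-1)}_j$ are defined by $a^{(-1)}_0=1/a_0$ and $a^{(-1)}_j=-\frac1{a_0}\sum_{i=1}^ja^{(-1)}_{j-i}a_i$ for $j\ge1$ (so that the lower triangular Toeplitz matrix with entries $a^{(-1)}_{i-j}$ is $A_L^{-1}$). The composite kernels are $\hat b_j=\sum_{i=0}^ja^{(-1)}_{j-i}b_i$ and $\hat c_j=\sum_{i=0}^ja^{(-1)}_{j-i}c_i$ for $j\ge0$. Zero-stability: each of $(\zeta-1)\sum_{j=0}^{\mathrm{k}-1}a_j\zeta^{\mathrm{k}-j-1}$, $\sum_{j=0}^{\mathrm{k}}b_j\zeta^{\mathrm{k}-j}$, $\sum_{j=0}^{\mathrm{k}-1}c_j\zeta^{\mathrm{k}-j-1}$ has all roots in the closed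 unit disk with those on the unit circle simple. *)

theory Defs
  imports "HOL-Computational_Algebra.Polynomial" "Jordan_Normal_Form.Char_Poly"
begin

definition toeplitz_L :: "nat \<Rightarrow> (nat \<Rightarrow> real) \<Rightarrow> real mat" where
  "toeplitz_L n a = mat n n (\<lambda>(i, j). if j \<le> i then a (i - j) else 0)"

definition vnorm2 :: "real vec \<Rightarrow> real" where
  "vnorm2 x = sqrt (x \<bullet> x)"

definition spectral_norm :: "real mat \<Rightarrow> real" where
  "spectral_norm M = (SUP x \<in> {x \<in> carrier_vec (dim_col M). vnorm2 x = 1}. vnorm2 (M *\<^sub>v x))"

fun doc :: "(nat \<Rightarrow> real) \<Rightarrow> nat \<Rightarrow> real" where
  "doc a j = (if j = 0 then 1 / a 0
              else - (1 / a 0) * (\<Sum>i\<in>{1..j}. doc a (j - i) * a i))"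

definition hat_kernel :: "(nat \<Rightarrow> real) \<Rightarrow> (nat \<Rightarrow> real) \<Rightarrow> nat \<Rightarrow> real" where
  "hat_kernel a b j = (\<Sum>i=0..j. doc a (j - i) * b i)"

definition rho_poly :: "nat \<Rightarrow> (nat \<Rightarrow> real) \<Rightarrow> complex poly" where
  "rho_poly k a = [:-1, 1:] * (\<Sum>j<k. monom (complex_of_real (a j)) (k - j - 1))"

definition sigma_poly :: "nat \<Rightarrow> (nat \<Rightarrow> real) \<Rightarrow> complex poly" where
  "sigma_poly k b = (\<Sum>j\<le>k. monom (complex_of_real (b j)) (k - j))"

definition gamma_poly :: "nat \<Rightarrow> (nat \<Rightarrow> real) \<Rightarrow> complex poly" where
  "gamma_poly k c = (\<Sum>j<k. monom (complex_of_real (c j)) (k - j - 1))"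

definition root_condition :: "complex poly \<Rightarrow> bool" where
  "root_condition p \<longleftrightarrow> (\<forall>z. poly p z = 0 \<longrightarrow> cmod z \<le> 1 \<and> (cmod z = 1 \<longrightarrow> order z p = 1))"

definition zero_stable :: "nat \<Rightarrow> (nat \<Rightarrow> real) \<Rightarrow> (nat \<Rightarrow> real) \<Rightarrow> (nat \<Rightarrow> real) \<Rightarrow> bool" where
  "zero_stable k a b c \<longleftrightarrow>
     root_condition (rho_poly k a) \<and> root_condition (sigma_poly k b) \<and> root_condition (gamma_poly k c)"

definition symb :: "nat \<Rightarrow> (nat \<Rightarrow> real) \<Rightarrow> real \<Rightarrow> complex" where
  "symb m a \<theta> = (\<Sum>j<m. complex_of_real (a j) * exp (\<i> * of_nat j * complex_of_real \<theta>))"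

end

theory Submission
  imports Defs "HOL-Complex_Analysis.Cauchy_Integral_Formula"
begin

(*
  Each kernel K among doc a, hat_kernel a b, hat_kernel a c is the coefficient sequence of a
  quotient p/a of polynomials, where a has no zeros in the closed unit disc: on the circle by
  hypothesis, inside it because a zero z would make 1/z a zero of rho outside the disc.  Hence K is
  absolutely summable and its Fourier series sums to the symbol quotient p(theta)/a(theta).

  For a truncation K_M of K, averaging over the N-th roots of unity with N >= M + n turns the
  bilinear form sum_{j <= i < n} K_{i-j} v_j u_i exactly into the mean of K_M(theta) v(theta)
  conj(u(theta)); Cauchy-Schwarz and the discrete Parseval identity bound it by
  max |K_M| |v| |u|, and the tail of K vanishes as M tends to infinity.  The matrix statements are
  the same bounds, read through A_L^{-1} = toeplitz(doc a) and A_L^{-1} B_L = toeplitz(hat_kernel a b),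
  and likewise for C_L.
*)

unbundle no vec_syntax and no inner_syntax

(* The recursive equation of doc would otherwise be unfolded by the simplifier without end. *)
declare doc.simps [simp del]

definition toeplitz_form :: "(nat \<Rightarrow> real) \<Rightarrow> nat \<Rightarrow> (nat \<Rightarrow> real) \<Rightarrow> (nat \<Rightarrow> real) \<Rightarrow> real" where
  "toeplitz_form g n v u = (\<Sum>i<n. \<Sum>j\<le>i. g (i - j) * v j * u i)"

definition dft_angle :: "nat \<Rightarrow> nat \<Rightarrow> real" where
  "dft_angle N t = 2 * pi * real t / real N"

lemma dft_angle_range: "t < N \<Longrightarrow> 0 \<le> dft_angle N t \<and> dft_angle N t < 2 * pi"
  by (auto simp: dft_angle_def field_simps)

lemma symb_conv_cis: "symb M g x = (\<Sum>m<M. of_real (g m) * cis (real m * x))"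
  by (simp add: symb_def cis_conv_exp mult.assoc)

lemma cnj_symb: "cnj (symb M g x) = (\<Sum>m<M. of_real (g m) * cis (- (real m * x)))"
  by (simp add: symb_conv_cis cis_cnj)

lemma sum_cis_dft_angle:
  fixes k :: int
  assumes "\<bar>k\<bar> < int N"
  shows "(\<Sum>t<N. cis (of_int k * dft_angle N t)) = (if k = 0 then of_nat N else 0)"
proof (cases "k = 0")
  case False
  define \<omega> where "\<omega> = cis (2 * pi * of_int k / real N)"
  have N: "N > 0" using assms by linarith
  have powers: "cis (of_int k * dft_angle N t) = \<omega> ^ t" for t
    unfolding \<omega>_def Complex.DeMoivre dft_angle_def by (simp add: field_simps)
  have "\<omega> ^ N = 1"
    using N by (simp add: \<omega>_def Complex.DeMoivre)
  moreover have "\<omega> \<noteq> 1"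
  proof
    assume "\<omega> = 1"
    then have "cos (2 * pi * of_int k / real N) = 1"
      by (simp add: \<omega>_def complex_eq_iff)
    then obtain m :: int where "2 * pi * of_int k / real N = of_int m * 2 * pi"
      by (auto simp: cos_one_2pi_int)
    then have "k = m * int N"
      using N by (simp add: field_simps) (metis of_int_eq_iff of_int_mult of_int_of_nat_eq)
    with False assms show False
      by (cases "m = 0") (auto simp: abs_mult dest: mult_le_cancel_right1[THEN iffD1])
  qed
  ultimately show ?thesis
    using False by (simp add: powers sum_gp_strict)
qed simp

lemma sum_delta_convolution:
  fixes f :: "nat \<Rightarrow> nat \<Rightarrow> nat \<Rightarrow> 'a :: comm_monoid_add"
  assumes "n \<le> M"
  shows "(\<Sum>m<M. \<Sum>j<n. \<Sum>i<n. if m + j = i then f m j i else 0) = (\<Sum>i<n. \<Sum>j\<le>i. f (i - j) j i)"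
proof -
  have inner: "(\<Sum>m<M. if m + j = i then f m j i else 0) = (if j \<le> i then f (i - j) j i else 0)"
    if "i < n" for i j
  proof -
    have "(\<Sum>m<M. if m + j = i then f m j i else 0) = (\<Sum>m<M. if m = i - j then (if j \<le> i then f (i - j) j i else 0) else 0)"
      by (intro sum.cong) auto
    also have "\<dots> = (if j \<le> i then f (i - j) j i else 0)"
      using that assms by (simp add: less_imp_diff_less)
    finally show ?thesis .
  qed
  have "(\<Sum>m<M. \<Sum>j<n. \<Sum>i<n. if m + j = i then f m j i else 0)
      = (\<Sum>i<n. \<Sum>j<n. \<Sum>m<M. if m + j = i then f m j i else 0)"
    by (subst sum.swap) (subst (2) sum.swap, subst sum.swap, rule refl)
  also have "\<dots> = (\<Sum>i<n. \<Sum>j<n. if j \<le> i then f (i - j) j i else 0)"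
    by (intro sum.cong refl) (simp add: inner)
  also have "\<dots> = (\<Sum>i<n. \<Sum>j\<le>i. f (i - j) j i)"
  proof (rule sum.cong[OF refl])
    fix i assume "i \<in> {..<n}"
    then have "{..<n} \<inter> {j. j \<le> i} = {..i}" by auto
    then show "(\<Sum>j<n. if j \<le> i then f (i - j) j i else 0) = (\<Sum>j\<le>i. f (i - j) j i)"
      by (simp add: sum.If_cases)
  qed
  finally show ?thesis .
qed

lemma symb_mult_cnj_symb:
  "symb M g x * symb n v x * cnj (symb n u x)
     = (\<Sum>m<M. \<Sum>j<n. \<Sum>i<n. of_real (g m * v j * u i) * cis (of_int (int m + int j - int i) * x))"
proof -
  have "symb M g x * symb n v x * cnj (symb n u x)
      = (\<Sum>m<M. \<Sum>j<n. \<Sum>i<n. (of_real (g m) * cis (real m * x)) * (of_real (v j) * cis (real j * x))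
                              * (of_real (u i) * cis (- (real i * x))))"
    unfolding cnj_symb unfolding symb_conv_cis sum_product unfolding sum_distrib_right
    unfolding sum_distrib_left by (rule sum.cong[OF refl], rule sum.swap)
  also have "\<dots> = (\<Sum>m<M. \<Sum>j<n. \<Sum>i<n. of_real (g m * v j * u i) * cis (of_int (int m + int j - int i) * x))"
    by (intro sum.cong refl) (simp add: Complex.cis_mult algebra_simps)
  finally show ?thesis .
qed

lemma sum_dft_symb_mult_cnj_symb:
  assumes "M + n \<le> N" and "n \<le> M"
  shows "(\<Sum>t<N. symb M g (dft_angle N t) * symb n v (dft_angle N t) * cnj (symb n u (dft_angle N t)))
       = of_nat N * of_real (toeplitz_form g n v u)"
proof -
  have "(\<Sum>t<N. symb M g (dft_angle N t) * symb n v (dft_angle N t) * cnj (symb n u (dft_angle N t)))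
      = (\<Sum>m<M. \<Sum>j<n. \<Sum>i<n. of_real (g m * v j * u i) * (\<Sum>t<N. cis (of_int (int m + int j - int i) * dft_angle N t)))"
    by (simp add: symb_mult_cnj_symb sum_distrib_left sum.swap[of _ "{..<N}"])
  also have "\<dots> = (\<Sum>m<M. \<Sum>j<n. \<Sum>i<n. if m + j = i then of_nat N * of_real (g m * v j * u i) else 0)"
    \<comment> \<open>the average over the N-th roots of unity kills every term with m + j \<noteq> i, as |m + j - i| < N\<close>
  proof (intro sum.cong refl)
    fix m j i assume "m \<in> {..<M}" "j \<in> {..<n}" "i \<in> {..<n}"
    then have "\<bar>int m + int j - int i\<bar> < int N" using assms by auto
    then show "of_real (g m * v j * u i) * (\<Sum>t<N. cis (of_int (int m + int j - int i) * dft_angle N t))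
             = (if m + j = i then of_nat N * of_real (g m * v j * u i) else 0)"
      using sum_cis_dft_angle[of "int m + int j - int i" N] by auto
  qed
  also have "\<dots> = of_nat N * of_real (toeplitz_form g n v u)"
    unfolding sum_delta_convolution[OF assms(2)] toeplitz_form_def by (simp add: sum_distrib_left)
  finally show ?thesis .
qed

lemma symb_unit:
  assumes "0 < n"
  shows "symb n (\<lambda>j. of_bool (j = 0)) x = 1"
proof -
  have "symb n (\<lambda>j. of_bool (j = 0)) x = (\<Sum>j<n. if j = 0 then 1 else 0)"
    unfolding symb_def by (intro sum.cong) auto
  then show ?thesis
    using assms by simp
qed

lemma toeplitz_form_unit: "toeplitz_form (\<lambda>j. of_bool (j = 0)) n v u = (\<Sum>i<n. v i * u i)"
proof -
  have "(\<Sum>j\<le>i. of_bool (i - j = 0) * v j * u i) = v i * u i" for i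
  proof -
    have "(\<Sum>j\<le>i. of_bool (i - j = 0) * v j * u i) = (\<Sum>j\<le>i. if j = i then v j * u i else 0)"
      by (intro sum.cong) auto
    then show ?thesis
      by simp
  qed
  then show ?thesis
    by (simp only: toeplitz_form_def)
qed

lemma sum_dft_norm_symb_squared:
  assumes "2 * n \<le> N"
  shows "(\<Sum>t<N. (cmod (symb n v (dft_angle N t)))\<^sup>2) = real N * (\<Sum>i<n. (v i)\<^sup>2)"
proof (cases "n = 0")
  case False
  have "of_real (\<Sum>t<N. (cmod (symb n v (dft_angle N t)))\<^sup>2)
      = (\<Sum>t<N. symb n (\<lambda>j. of_bool (j = 0)) (dft_angle N t) * symb n v (dft_angle N t) * cnj (symb n v (dft_angle N t)))"
    unfolding of_real_sum complex_norm_square using False by (simp add: symb_unit)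
  also have "\<dots> = of_nat N * of_real (\<Sum>i<n. v i * v i)"
    using assms by (simp add: sum_dft_symb_mult_cnj_symb toeplitz_form_unit)
  finally have "of_real (\<Sum>t<N. (cmod (symb n v (dft_angle N t)))\<^sup>2) = complex_of_real (real N * (\<Sum>i<n. v i * v i))"
    by simp
  then show ?thesis
    by (simp only: of_real_eq_iff power2_eq_square)
qed (simp add: symb_def)

lemma toeplitz_form_le_of_dft_bound:
  assumes "M + n \<le> N" and "n \<le> M" and "0 < N"
    and bound: "\<And>t. t < N \<Longrightarrow> cmod (symb M g (dft_angle N t)) \<le> S"
  shows "toeplitz_form g n v u \<le> S * L2_set v {..<n} * L2_set u {..<n}"
proof -
  define V where "V t = cmod (symb n v (dft_angle N t))" for t
  define U where "U t = cmod (symb n u (dft_angle N t))" for t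
  have "0 \<le> S"
    using bound[of 0] \<open>0 < N\<close> norm_ge_zero order_trans by blast
  have L2_dft: "L2_set (\<lambda>t. cmod (symb n w (dft_angle N t))) {..<N} = sqrt (real N) * L2_set w {..<n}" for w
    using assms by (simp add: L2_set_def sum_dft_norm_symb_squared real_sqrt_mult)
  have "real N * toeplitz_form g n v u
      = Re (\<Sum>t<N. symb M g (dft_angle N t) * symb n v (dft_angle N t) * cnj (symb n u (dft_angle N t)))"
    using assms by (simp add: sum_dft_symb_mult_cnj_symb)
  also have "\<dots> \<le> (\<Sum>t<N. cmod (symb M g (dft_angle N t) * symb n v (dft_angle N t) * cnj (symb n u (dft_angle N t))))"
    by (rule order_trans[OF complex_Re_le_cmod norm_sum])
  also have "\<dots> \<le> (\<Sum>t<N. S * (\<bar>V t\<bar> * \<bar>U t\<bar>))"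
  proof (intro sum_mono)
    fix t assume "t \<in> {..<N}"
    then show "cmod (symb M g (dft_angle N t) * symb n v (dft_angle N t) * cnj (symb n u (dft_angle N t)))
             \<le> S * (\<bar>V t\<bar> * \<bar>U t\<bar>)"
      using bound[of t] unfolding V_def U_def norm_mult complex_mod_cnj abs_norm_cancel mult.assoc
      by (intro mult_right_mono) auto
  qed
  also have "\<dots> \<le> S * (L2_set V {..<N} * L2_set U {..<N})"
    using \<open>0 \<le> S\<close> L2_set_mult_ineq[of V U "{..<N}"] by (simp add: sum_distrib_left[symmetric] mult_left_mono)
  also have "\<dots> = real N * (S * L2_set v {..<n} * L2_set u {..<n})"
    unfolding V_def U_def L2_dft by simp
  finally show ?thesis
    using \<open>0 < N\<close> by simp
qed

lemma toeplitz_form_ge_of_dft_bound: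
  assumes "M + n \<le> N" and "n \<le> M" and "0 < N"
    and bound: "\<And>t. t < N \<Longrightarrow> L \<le> Re (symb M g (dft_angle N t))"
  shows "L * (\<Sum>i<n. (v i)\<^sup>2) \<le> toeplitz_form g n v v"
proof -
  have "real N * (L * (\<Sum>i<n. (v i)\<^sup>2)) = L * (\<Sum>t<N. (cmod (symb n v (dft_angle N t)))\<^sup>2)"
    using assms by (simp add: sum_dft_norm_symb_squared)
  also have "\<dots> = (\<Sum>t<N. L * (cmod (symb n v (dft_angle N t)))\<^sup>2)"
    by (rule sum_distrib_left)
  also have "\<dots> \<le> (\<Sum>t<N. Re (symb M g (dft_angle N t)) * (cmod (symb n v (dft_angle N t)))\<^sup>2)"
    using bound by (intro sum_mono mult_right_mono) auto
  also have "\<dots> = Re (\<Sum>t<N. symb M g (dft_angle N t) * symb n v (dft_angle N t) * cnj (symb n v (dft_angle N t)))"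
    unfolding Re_sum by (intro sum.cong refl) (simp add: mult.assoc flip: complex_norm_square)
  also have "\<dots> = real N * toeplitz_form g n v v"
    using assms by (simp add: sum_dft_symb_mult_cnj_symb)
  finally show ?thesis
    using \<open>0 < N\<close> by simp
qed

lemma tendsto_suminf_tail_0:
  fixes f :: "nat \<Rightarrow> 'a::real_normed_vector"
  assumes "summable f"
  shows "(\<lambda>M. \<Sum>m. f (m + M)) \<longlonglongrightarrow> 0"
proof -
  have "(\<lambda>M. suminf f - (\<Sum>m<M. f m)) \<longlonglongrightarrow> suminf f - suminf f"
    using assms by (intro tendsto_diff tendsto_const summable_LIMSEQ)
  then show ?thesis
    using assms by (simp add: suminf_minus_initial_segment)
qed

lemma norm_sums_minus_symb_le:
  assumes "summable (\<lambda>m. \<bar>F m\<bar>)" and "(\<lambda>m. of_real (F m) * cis (real m * x)) sums P"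
  shows "cmod (P - symb M F x) \<le> (\<Sum>m. \<bar>F (m + M)\<bar>)"
proof -
  have "(\<lambda>m. of_real (F (m + M)) * cis (real (m + M) * x)) sums (P - symb M F x)"
    using sums_split_initial_segment[OF assms(2), of M] by (simp add: symb_conv_cis)
  then have "P - symb M F x = (\<Sum>m. of_real (F (m + M)) * cis (real (m + M) * x))"
    by (simp add: sums_iff)
  also have "cmod \<dots> \<le> (\<Sum>m. \<bar>F (m + M)\<bar>)"
    using summable_norm[of "\<lambda>m. of_real (F (m + M)) * cis (real (m + M) * x)"]
      summable_ignore_initial_segment[OF assms(1), of M]
    by (simp add: norm_mult)
  finally show ?thesis .
qed

lemma toeplitz_form_le_of_series_bound:
  assumes summable: "summable (\<lambda>m. \<bar>F m\<bar>)"
    and series: "\<And>x. (\<lambda>m. of_real (F m) * cis (real m * x)) sums P x"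
    and bound: "\<And>x. 0 \<le> x \<Longrightarrow> x < 2 * pi \<Longrightarrow> cmod (P x) \<le> S"
  shows "toeplitz_form F n v u \<le> S * L2_set v {..<n} * L2_set u {..<n}"
proof -
  define T where "T M = (\<Sum>m. \<bar>F (m + M)\<bar>)" for M
  have limit: "(\<lambda>M. (S + T M) * L2_set v {..<n} * L2_set u {..<n}) \<longlonglongrightarrow> S * L2_set v {..<n} * L2_set u {..<n}"
    using tendsto_suminf_tail_0[OF summable] unfolding T_def
    by (auto intro!: tendsto_eq_intros)
  have "toeplitz_form F n v u \<le> (S + T M) * L2_set v {..<n} * L2_set u {..<n}" if "M \<ge> max n 1" for M
  proof (rule toeplitz_form_le_of_dft_bound[where N = "M + n"])
    fix t assume "t < M + n"
    then have "0 \<le> dft_angle (M + n) t" "dft_angle (M + n) t < 2 * pi"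
      by (simp_all add: dft_angle_range)
    then show "cmod (symb M F (dft_angle (M + n) t)) \<le> S + T M"
      using bound norm_sums_minus_symb_le[OF summable series, of "dft_angle (M + n) t" M]
        norm_triangle_ineq4[of "P (dft_angle (M + n) t)" "P (dft_angle (M + n) t) - symb M F (dft_angle (M + n) t)"]
      unfolding T_def by force
  qed (use that in auto)
  then show ?thesis
    by (intro LIMSEQ_le_const[OF limit]) blast
qed

lemma toeplitz_form_ge_of_series_bound:
  assumes summable: "summable (\<lambda>m. \<bar>F m\<bar>)"
    and series: "\<And>x. (\<lambda>m. of_real (F m) * cis (real m * x)) sums P x"
    and bound: "\<And>x. 0 \<le> x \<Longrightarrow> x < 2 * pi \<Longrightarrow> L \<le> Re (P x)"
  shows "L * (\<Sum>i<n. (v i)\<^sup>2) \<le> toeplitz_form F n v v"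
proof -
  define T where "T M = (\<Sum>m. \<bar>F (m + M)\<bar>)" for M
  have limit: "(\<lambda>M. (L - T M) * (\<Sum>i<n. (v i)\<^sup>2)) \<longlonglongrightarrow> L * (\<Sum>i<n. (v i)\<^sup>2)"
    using tendsto_suminf_tail_0[OF summable] unfolding T_def
    by (auto intro!: tendsto_eq_intros)
  have "(L - T M) * (\<Sum>i<n. (v i)\<^sup>2) \<le> toeplitz_form F n v v" if "M \<ge> max n 1" for M
  proof (rule toeplitz_form_ge_of_dft_bound[where N = "M + n"])
    fix t assume "t < M + n"
    then have "0 \<le> dft_angle (M + n) t" "dft_angle (M + n) t < 2 * pi"
      by (simp_all add: dft_angle_range)
    then show "L - T M \<le> Re (symb M F (dft_angle (M + n) t))"
      using bound norm_sums_minus_symb_le[OF summable series, of "dft_angle (M + n) t" M]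
        complex_Re_le_cmod[of "P (dft_angle (M + n) t) - symb M F (dft_angle (M + n) t)"]
      unfolding T_def by force
  qed (use that in auto)
  then show ?thesis
    by (intro LIMSEQ_le_const2[OF limit]) blast
qed

definition symb_poly :: "nat \<Rightarrow> (nat \<Rightarrow> real) \<Rightarrow> complex poly" where
  "symb_poly k a = (\<Sum>j<k. monom (of_real (a j)) j)"

lemma coeff_symb_poly: "coeff (symb_poly k a) i = (if i < k then of_real (a i) else 0)"
  by (simp add: symb_poly_def coeff_sum)

lemma fps_of_poly_symb_poly:
  "(\<And>j. k \<le> j \<Longrightarrow> a j = 0) \<Longrightarrow> fps_of_poly (symb_poly k a) = Abs_fps (\<lambda>j. of_real (a j))"
  by (intro fps_ext) (simp add: coeff_symb_poly)

lemma poly_symb_poly_cis: "poly (symb_poly k a) (cis x) = symb k a x"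
  by (simp add: symb_poly_def symb_conv_cis poly_sum poly_monom Complex.DeMoivre)

lemma fps_nth_inverse_eq_doc:
  assumes "a 0 \<noteq> 0"
  shows "fps_nth (inverse (Abs_fps (\<lambda>j. complex_of_real (a j)))) n = of_real (doc a n)"
proof (induction n rule: less_induct)
  case (less n)
  define f where "f = Abs_fps (\<lambda>j. complex_of_real (a j))"
  show ?case
  proof (cases "n = 0")
    case True
    then show ?thesis
      using assms by (simp add: fps_inverse_def doc.simps inverse_eq_divide)
  next
    case False
    have "fps_nth (inverse f) n = - inverse (fps_nth f 0) * (\<Sum>i=1..n. fps_nth f i * fps_nth (inverse f) (n - i))"
      using False unfolding fps_inverse_def by (simp add: fps_right_inverse_constructor_rec)
    also have "(\<Sum>i=1..n. fps_nth f i * fps_nth (inverse f) (n - i)) = of_real (\<Sum>i=1..n. doc a (n - i) * a i)"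
      unfolding of_real_sum using less.IH by (intro sum.cong refl) (simp add: f_def)
    also have "- inverse (fps_nth f 0) * of_real (\<Sum>i=1..n. doc a (n - i) * a i) = of_real (doc a n)"
      using False by (subst (2) doc.simps) (simp add: f_def inverse_eq_divide)
    finally show ?thesis
      unfolding f_def .
  qed
qed

lemma poly_rho_poly_reflect:
  assumes "w \<noteq> 0"
  shows "poly (rho_poly k a) w = (w - 1) * w ^ (k - 1) * poly (symb_poly k a) (inverse w)"
proof -
  have power: "w ^ (k - j - 1) = w ^ (k - 1) * inverse w ^ j" if "j < k" for j
  proof -
    have "w ^ (k - 1) = w ^ (k - j - 1) * w ^ j"
      using that by (simp flip: power_add)
    then show ?thesis
      using assms by (simp add: power_inverse)
  qed
  have "poly (rho_poly k a) w = (w - 1) * (\<Sum>j<k. of_real (a j) * w ^ (k - j - 1))"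
    by (simp add: rho_poly_def poly_sum poly_monom left_diff_distrib)
  also have "(\<Sum>j<k. of_real (a j) * w ^ (k - j - 1)) = w ^ (k - 1) * poly (symb_poly k a) (inverse w)"
    unfolding symb_poly_def poly_sum poly_monom sum_distrib_left
  proof (rule sum.cong[OF refl])
    fix j assume "j \<in> {..<k}"
    then have "j < k" by simp
    then show "of_real (a j) * w ^ (k - j - 1) = w ^ (k - 1) * (of_real (a j) * inverse w ^ j)"
      by (simp only: power mult.left_commute)
  qed
  finally show ?thesis
    by (simp only: mult.assoc)
qed

lemma symb_poly_nonzero_in_closed_disc:
  assumes "0 < k" and "a 0 \<noteq> 0" and rho: "root_condition (rho_poly k a)"
    and circle: "\<And>\<theta>. 0 \<le> \<theta> \<Longrightarrow> \<theta> < 2 * pi \<Longrightarrow> symb k a \<theta> \<noteq> 0"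
    and "cmod z \<le> 1"
  shows "poly (symb_poly k a) z \<noteq> 0"
proof
  assume root: "poly (symb_poly k a) z = 0"
  consider "z = 0" | "cmod z = 1" | "0 < cmod z" "cmod z < 1"
    using \<open>cmod z \<le> 1\<close> by fastforce
  then show False
  proof cases
    case 1
    then show False
      using root \<open>0 < k\<close> \<open>a 0 \<noteq> 0\<close> by (simp add: poly_0_coeff_0 coeff_symb_poly)
  next
    case 2
    then have "z = cis (Arg2pi z)"
      by (simp add: cis_conv_exp complex_norm_eq_1_exp)
    then have "symb k a (Arg2pi z) = 0"
      using root by (simp flip: poly_symb_poly_cis)
    then show False
      using circle Arg2pi[of z] by blast
  next
    case 3
    then have "poly (rho_poly k a) (inverse z) = 0"
      using root by (simp add: poly_rho_poly_reflect)
    then have "cmod (inverse z) \<le> 1"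
      using rho unfolding root_condition_def by blast
    moreover have "1 < cmod (inverse z)"
      using 3 by (simp add: norm_inverse one_less_inverse)
    ultimately show False
      by linarith
  qed
qed

lemma fps_poly_quotient_radius:
  fixes A P :: "complex poly"
  assumes nonzero: "\<And>z. cmod z \<le> 1 \<Longrightarrow> poly A z \<noteq> 0"
  obtains R where "1 < R" and "ereal R \<le> fps_conv_radius (fps_of_poly P / fps_of_poly A)"
    and "\<And>z. cmod z < R \<Longrightarrow> eval_fps (fps_of_poly P / fps_of_poly A) z = poly P z / poly A z"
proof -
  define Z where "Z = {z. poly A z = 0}"
  define R where "R = Min (insert 2 (cmod ` Z))"
  have "finite Z"
    unfolding Z_def using nonzero[of 0] by (intro poly_roots_finite) auto
  have "1 < R"
    using \<open>finite Z\<close> nonzero unfolding R_def Z_def by force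
  have no_roots: "poly A z \<noteq> 0" if "cmod z < R" for z
    using \<open>finite Z\<close> that unfolding R_def Z_def by force
  have "ereal R \<le> fps_conv_radius (fps_of_poly P / fps_of_poly A)"
    using \<open>1 < R\<close> no_roots fps_conv_radius_divide'[of "fps_of_poly P" "fps_of_poly A" "ereal R"]
    by auto
  moreover have "eval_fps (fps_of_poly P / fps_of_poly A) z = poly P z / poly A z" if "cmod z < R" for z
    using \<open>1 < R\<close> no_roots that eval_fps_divide'[of "fps_of_poly P" "fps_of_poly A" "ereal R" z]
    by auto
  ultimately show ?thesis
    using \<open>1 < R\<close> that by blast
qed

lemma hat_kernel_fourier_series:
  assumes "a 0 \<noteq> 0" and a_ext: "\<And>j. k \<le> j \<Longrightarrow> a j = 0" and p_ext: "\<And>j. K \<le> j \<Longrightarrow> p j = 0"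
    and nonzero: "\<And>z. cmod z \<le> 1 \<Longrightarrow> poly (symb_poly k a) z \<noteq> 0"
  shows "summable (\<lambda>m. \<bar>hat_kernel a p m\<bar>)"
    and "(\<lambda>m. of_real (hat_kernel a p m) * cis (real m * x)) sums (symb K p x / symb k a x)"
proof -
  define H where "H = fps_of_poly (symb_poly K p) / fps_of_poly (symb_poly k a)"
  obtain R where "1 < R" and radius: "ereal R \<le> fps_conv_radius H"
    and eval: "\<And>z. cmod z < R \<Longrightarrow> eval_fps H z = poly (symb_poly K p) z / poly (symb_poly k a) z"
    using fps_poly_quotient_radius[OF nonzero] unfolding H_def by blast
  have "H = fps_of_poly (symb_poly K p) * inverse (fps_of_poly (symb_poly k a))"
    unfolding H_def using \<open>a 0 \<noteq> 0\<close> by (intro fps_divide_unit) (simp add: fps_of_poly_symb_poly[OF a_ext])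
  then have coeffs: "fps_nth H m = of_real (hat_kernel a p m)" for m
    by (simp add: fps_of_poly_symb_poly a_ext p_ext fps_mult_nth fps_nth_inverse_eq_doc[of a, OF \<open>a 0 \<noteq> 0\<close>]
        hat_kernel_def mult.commute)
  have "ereal (cmod (cis x)) < ereal R"
    using \<open>1 < R\<close> by simp
  then have "ereal (cmod (cis x)) < fps_conv_radius H"
    using radius by (rule less_le_trans)
  then show "summable (\<lambda>m. \<bar>hat_kernel a p m\<bar>)"
    and "(\<lambda>m. of_real (hat_kernel a p m) * cis (real m * x)) sums (symb K p x / symb k a x)"
    using norm_summable_fps[of "cis x" H] sums_eval_fps[of "cis x" H] eval[of "cis x"] \<open>1 < R\<close>
    by (simp_all add: coeffs norm_mult Complex.DeMoivre poly_symb_poly_cis)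
qed

lemma toeplitz_L_carrier [simp]: "toeplitz_L n g \<in> carrier_mat n n"
  by (simp add: toeplitz_L_def)

lemma dim_toeplitz_L [simp]: "dim_row (toeplitz_L n g) = n" "dim_col (toeplitz_L n g) = n"
  by (simp_all add: toeplitz_L_def)

lemma index_toeplitz_L [simp]:
  "i < n \<Longrightarrow> j < n \<Longrightarrow> toeplitz_L n g $$ (i, j) = (if j \<le> i then g (i - j) else 0)"
  by (simp add: toeplitz_L_def)

lemma toeplitz_L_mult:
  "toeplitz_L n g * toeplitz_L n h = toeplitz_L n (\<lambda>d. \<Sum>i=0..d. g (d - i) * h i)"
proof (rule eq_matI)
  fix i l assume "i < dim_row (toeplitz_L n (\<lambda>d. \<Sum>i=0..d. g (d - i) * h i))"
    and "l < dim_col (toeplitz_L n (\<lambda>d. \<Sum>i=0..d. g (d - i) * h i))"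
  then have "i < n" "l < n" by simp_all
  have "(toeplitz_L n g * toeplitz_L n h) $$ (i, l)
      = (\<Sum>j<n. if l \<le> j \<and> j \<le> i then g (i - j) * h (j - l) else 0)"
    using \<open>i < n\<close> \<open>l < n\<close> by (auto simp: scalar_prod_def lessThan_atLeast0 intro: sum.cong)
  also have "\<dots> = (\<Sum>j\<in>{l..i}. g (i - j) * h (j - l))"
    using \<open>i < n\<close> by (intro sum.mono_neutral_cong_right) auto
  also have "\<dots> = (if l \<le> i then (\<Sum>m=0..i-l. g (i - l - m) * h m) else 0)"
    by (auto intro!: sum.reindex_bij_witness[where i = "\<lambda>m. m + l" and j = "\<lambda>j. j - l"])
  also have "\<dots> = toeplitz_L n (\<lambda>d. \<Sum>i=0..d. g (d - i) * h i) $$ (i, l)"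
    using \<open>i < n\<close> \<open>l < n\<close> by simp
  finally show "(toeplitz_L n g * toeplitz_L n h) $$ (i, l) = toeplitz_L n (\<lambda>d. \<Sum>i=0..d. g (d - i) * h i) $$ (i, l)" .
qed simp_all

lemma toeplitz_L_doc_mult: "toeplitz_L n (doc a) * toeplitz_L n p = toeplitz_L n (hat_kernel a p)"
  unfolding toeplitz_L_mult hat_kernel_def ..

lemma hat_kernel_self:
  assumes "a 0 \<noteq> 0"
  shows "hat_kernel a a = (\<lambda>d. of_bool (d = 0))"
proof
  fix d
  show "hat_kernel a a d = of_bool (d = 0)"
  proof (cases "d = 0")
    case False
    have "hat_kernel a a d = doc a d * a 0 + (\<Sum>i=1..d. doc a (d - i) * a i)"
      by (simp add: hat_kernel_def sum.atLeast_Suc_atMost)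
    also have "doc a d = - (1 / a 0) * (\<Sum>i=1..d. doc a (d - i) * a i)"
      using False by (subst doc.simps) simp
    finally show ?thesis
      using False assms by simp
  qed (use assms in \<open>simp add: hat_kernel_def, subst doc.simps, simp\<close>)
qed

lemma toeplitz_L_unit: "toeplitz_L n (\<lambda>d. of_bool (d = 0)) = 1\<^sub>m n"
  by (rule eq_matI) auto

lemma left_inverse_toeplitz_L_eq_doc:
  assumes "a 0 \<noteq> 0" and "B \<in> carrier_mat n n" and "B * toeplitz_L n a = 1\<^sub>m n"
  shows "B = toeplitz_L n (doc a)"
proof -
  have "toeplitz_L n (doc a) * toeplitz_L n a = 1\<^sub>m n"
    using assms(1) by (simp add: toeplitz_L_doc_mult hat_kernel_self toeplitz_L_unit)
  then have right_inverse: "toeplitz_L n a * toeplitz_L n (doc a) = 1\<^sub>m n"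
    by (rule mat_mult_left_right_inverse[rotated 2]) auto
  have "toeplitz_L n (doc a) = (B * toeplitz_L n a) * toeplitz_L n (doc a)"
    using assms(3) by simp
  also have "\<dots> = B * (toeplitz_L n a * toeplitz_L n (doc a))"
    using assms(2) by (rule assoc_mult_mat) auto
  finally show ?thesis
    using assms(2) by (simp add: right_inverse)
qed

unbundle no vec_syntax and no inner_syntax

lemma scalar_prod_self_eq_sum:
  "(x :: real Matrix.vec) \<in> carrier_vec n \<Longrightarrow> x \<bullet> x = (\<Sum>i<n. (x $ i)\<^sup>2)"
  by (simp add: scalar_prod_def lessThan_atLeast0 power2_eq_square)

lemma vnorm2_eq_L2_set: "x \<in> carrier_vec n \<Longrightarrow> vnorm2 x = L2_set (($) x) {..<n}"
  by (simp add: vnorm2_def L2_set_def scalar_prod_self_eq_sum)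

lemma scalar_prod_toeplitz_L:
  assumes "x \<in> carrier_vec n" and "y \<in> carrier_vec n"
  shows "y \<bullet> (toeplitz_L n g *\<^sub>v x) = toeplitz_form g n (($) x) (($) y)"
proof -
  have "(toeplitz_L n g *\<^sub>v x) $ i = (\<Sum>j\<le>i. g (i - j) * x $ j)" if "i < n" for i
  proof -
    have "(toeplitz_L n g *\<^sub>v x) $ i = (\<Sum>j<n. if j \<le> i then g (i - j) * x $ j else 0)"
      using that assms(1) by (auto simp: scalar_prod_def lessThan_atLeast0 intro: sum.cong)
    also have "\<dots> = (\<Sum>j\<le>i. g (i - j) * x $ j)"
      using that by (intro sum.mono_neutral_cong_right) auto
    finally show ?thesis .
  qed
  then show ?thesis
    using assms(2) by (simp add: scalar_prod_def toeplitz_form_def lessThan_atLeast0 sum_distrib_left mult_ac)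
qed

lemma spectral_norm_le_of_bilinear_bound:
  assumes "0 < n" and T: "T \<in> carrier_mat n n" and "0 \<le> S"
    and bound: "\<And>x y. x \<in> carrier_vec n \<Longrightarrow> y \<in> carrier_vec n \<Longrightarrow> y \<bullet> (T *\<^sub>v x) \<le> S * vnorm2 x * vnorm2 y"
  shows "spectral_norm T \<le> S"
  unfolding spectral_norm_def
proof (rule cSUP_least)
  have "unit_vec n 0 \<in> {x \<in> carrier_vec (dim_col T). vnorm2 x = 1}"
    using \<open>0 < n\<close> T by (simp add: vnorm2_def)
  then show "{x \<in> carrier_vec (dim_col T). vnorm2 x = 1} \<noteq> {}"
    by blast
next
  fix x assume "x \<in> {x \<in> carrier_vec (dim_col T). vnorm2 x = 1}"
  then have x: "x \<in> carrier_vec n" and "vnorm2 x = 1"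
    using T by auto
  define y where "y = T *\<^sub>v x"
  have y: "y \<in> carrier_vec n"
    using T x by (simp add: y_def)
  have "(vnorm2 y)\<^sup>2 = y \<bullet> y"
    using y by (simp add: vnorm2_def scalar_prod_self_eq_sum sum_nonneg)
  also have "\<dots> \<le> S * vnorm2 y"
    using bound[OF x y] \<open>vnorm2 x = 1\<close> by (simp add: y_def)
  finally have "vnorm2 y * vnorm2 y \<le> S * vnorm2 y"
    by (simp add: power2_eq_square)
  show "vnorm2 (T *\<^sub>v x) \<le> S"
  proof (rule ccontr)
    assume "\<not> vnorm2 (T *\<^sub>v x) \<le> S"
    then have "S * vnorm2 y < vnorm2 y * vnorm2 y"
      using \<open>0 \<le> S\<close> by (intro mult_strict_right_mono) (auto simp: y_def)
    with \<open>vnorm2 y * vnorm2 y \<le> S * vnorm2 y\<close> show False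
      by linarith
  qed
qed

lemma spectral_norm_toeplitz_L_le:
  assumes "0 < n" and "0 \<le> S"
    and "\<And>v u. toeplitz_form g n v u \<le> S * L2_set v {..<n} * L2_set u {..<n}"
  shows "spectral_norm (toeplitz_L n g) \<le> S"
proof (rule spectral_norm_le_of_bilinear_bound)
  fix x y :: "real Matrix.vec"
  assume "x \<in> carrier_vec n" and "y \<in> carrier_vec n"
  then show "y \<bullet> (toeplitz_L n g *\<^sub>v x) \<le> S * vnorm2 x * vnorm2 y"
    using assms(3)[of "($) x" "($) y"] by (simp only: scalar_prod_toeplitz_L vnorm2_eq_L2_set)
qed (use assms in auto)

lemma smult_mat_mult_vec:
  "A \<in> carrier_mat nr nc \<Longrightarrow> v \<in> carrier_vec nc \<Longrightarrow> (c \<cdot>\<^sub>m A) *\<^sub>v v = c \<cdot>\<^sub>v (A *\<^sub>v v)"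
  by (rule eq_vecI) (auto simp: scalar_prod_def sum_distrib_left mult.assoc)

lemma scalar_prod_sym_part:
  fixes M :: "real mat"
  assumes M: "M \<in> carrier_mat n n" and v: "v \<in> carrier_vec n"
  shows "v \<bullet> (((1/2) \<cdot>\<^sub>m (M + transpose_mat M)) *\<^sub>v v) = v \<bullet> (M *\<^sub>v v)"
proof -
  have "v \<bullet> (transpose_mat M *\<^sub>v v) = v \<bullet> (M *\<^sub>v v)"
    using M v transpose_vec_mult_scalar[OF M v v] comm_scalar_prod[of v n "transpose_mat M *\<^sub>v v"]
    by simp
  moreover have "((1/2) \<cdot>\<^sub>m (M + transpose_mat M)) *\<^sub>v v = (1/2) \<cdot>\<^sub>v (M *\<^sub>v v + transpose_mat M *\<^sub>v v)"
    using M v by (simp add: smult_mat_mult_vec[of _ n n] add_mult_distrib_mat_vec[of _ n n])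
  moreover have "v \<bullet> ((1/2) \<cdot>\<^sub>v (M *\<^sub>v v + transpose_mat M *\<^sub>v v))
      = (1/2) * (v \<bullet> (M *\<^sub>v v) + v \<bullet> (transpose_mat M *\<^sub>v v))"
    using M v by (simp add: scalar_prod_add_distrib[of v n])
  ultimately show ?thesis
    by simp
qed

lemma scalar_prod_self_pos:
  assumes "(v :: real Matrix.vec) \<in> carrier_vec n" and "v \<noteq> 0\<^sub>v n"
  shows "0 < v \<bullet> v"
proof -
  obtain i where "i < n" and "v $ i \<noteq> 0"
    using assms by (metis eq_vecI carrier_vecD index_zero_vec)
  then show ?thesis
    using assms(1) by (simp add: scalar_prod_self_eq_sum) (intro sum_pos2[of "{..<n}" i], auto)
qed

lemma eigenvalue_sym_part_ge:
  fixes M :: "real mat"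
  assumes M: "M \<in> carrier_mat n n"
    and quadratic: "\<And>v. v \<in> carrier_vec n \<Longrightarrow> L * (v \<bullet> v) \<le> v \<bullet> (M *\<^sub>v v)"
    and "eigenvalue ((1/2) \<cdot>\<^sub>m (M + transpose_mat M)) \<mu>"
  shows "L \<le> \<mu>"
proof -
  obtain v where v: "v \<in> carrier_vec n" "v \<noteq> 0\<^sub>v n"
    and eigen: "((1/2) \<cdot>\<^sub>m (M + transpose_mat M)) *\<^sub>v v = \<mu> \<cdot>\<^sub>v v"
    using assms(3) M unfolding eigenvalue_def eigenvector_def by auto
  have "\<mu> * (v \<bullet> v) = v \<bullet> (M *\<^sub>v v)"
    using scalar_prod_sym_part[OF M v(1)] eigen v(1) by simp
  then have "L * (v \<bullet> v) \<le> \<mu> * (v \<bullet> v)"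
    using quadratic[OF v(1)] by simp
  then show ?thesis
    using scalar_prod_self_pos[OF v] by simp
qed

lemma eigenvalue_toeplitz_L_sym_part_ge:
  assumes "\<And>v. L * (\<Sum>i<n. (v i)\<^sup>2) \<le> toeplitz_form g n v v"
    and "eigenvalue ((1/2) \<cdot>\<^sub>m (toeplitz_L n g + transpose_mat (toeplitz_L n g))) \<mu>"
  shows "L \<le> \<mu>"
proof (rule eigenvalue_sym_part_ge[OF toeplitz_L_carrier _ assms(2)])
  fix v :: "real Matrix.vec"
  assume "v \<in> carrier_vec n"
  then show "L * (v \<bullet> v) \<le> v \<bullet> (toeplitz_L n g *\<^sub>v v)"
    using assms(1)[of "($) v"] by (simp only: scalar_prod_toeplitz_L scalar_prod_self_eq_sum)
qed

lemma hat_kernel_unit: "hat_kernel a (\<lambda>j. of_bool (j = 0)) = doc a"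
proof
  fix j
  have "hat_kernel a (\<lambda>j. of_bool (j = 0)) j = (\<Sum>i=0..j. if i = 0 then doc a j else 0)"
    unfolding hat_kernel_def by (intro sum.cong) auto
  then show "hat_kernel a (\<lambda>j. of_bool (j = 0)) j = doc a j"
    by simp
qed

lemma toeplitz_form_hat_kernel_le:
  assumes "a 0 \<noteq> 0" and "\<And>j. k \<le> j \<Longrightarrow> a j = 0" and "\<And>j. K \<le> j \<Longrightarrow> p j = 0"
    and "\<And>z. cmod z \<le> 1 \<Longrightarrow> poly (symb_poly k a) z \<noteq> 0"
    and "\<forall>\<theta>\<in>{0..<2*pi}. cmod (symb K p \<theta> / symb k a \<theta>) \<le> S"
  shows "toeplitz_form (hat_kernel a p) n v u \<le> S * L2_set v {..<n} * L2_set u {..<n}"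
  by (rule toeplitz_form_le_of_series_bound[OF hat_kernel_fourier_series[OF assms(1-4)]])
    (use assms(5) in auto)

lemma toeplitz_form_hat_kernel_ge:
  assumes "a 0 \<noteq> 0" and "\<And>j. k \<le> j \<Longrightarrow> a j = 0" and "\<And>j. K \<le> j \<Longrightarrow> p j = 0"
    and "\<And>z. cmod z \<le> 1 \<Longrightarrow> poly (symb_poly k a) z \<noteq> 0"
    and "\<forall>\<theta>\<in>{0..<2*pi}. L \<le> Re (symb K p \<theta> / symb k a \<theta>)"
  shows "L * (\<Sum>i<n. (v i)\<^sup>2) \<le> toeplitz_form (hat_kernel a p) n v v"
  by (rule toeplitz_form_ge_of_series_bound[OF hat_kernel_fourier_series[OF assms(1-4)]])
    (use assms(5) in auto)

lemma sum_atLeast1_eq_toeplitz_form: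
  "(\<Sum>i=1..n. \<Sum>j=1..i. G (i - j) * v j * u i) = toeplitz_form G n (\<lambda>i. v (Suc i)) (\<lambda>i. u (Suc i))"
  by (simp add: toeplitz_form_def sum.atLeast1_atMost_eq lessThan_Suc_atMost)

lemma sum_atLeast1_abs_power2: "(\<Sum>i=1..n. \<bar>v i\<bar>\<^sup>2) = (\<Sum>i<n. (v (Suc i))\<^sup>2 :: real)"
  by (simp add: sum.atLeast1_atMost_eq)

theorem lemma2p4:
  fixes k :: nat and a b c :: "nat \<Rightarrow> real" and sigF sigE lamI :: real
  assumes k: "k \<ge> 1"
    and pos: "a 0 > 0" "b 0 > 0" "c 0 > 0"
    and a_ext: "\<And>j. j \<ge> k \<Longrightarrow> a j = 0"
    and c_ext: "\<And>j. j \<ge> k \<Longrightarrow> c j = 0"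
    and b_ext: "\<And>j. j \<ge> k + 1 \<Longrightarrow> b j = 0"
    and zs: "zero_stable k a b c"
    and a_nz: "\<And>\<theta>. 0 \<le> \<theta> \<Longrightarrow> \<theta> < 2 * pi \<Longrightarrow> symb k a \<theta> \<noteq> 0"
    and sigF_max: "\<forall>\<theta>\<in>{0..<2*pi}. cmod (1 / symb k a \<theta>) \<le> sigF"
                "\<exists>\<theta>\<in>{0..<2*pi}. cmod (1 / symb k a \<theta>) = sigF"
    and sigE_max: "\<forall>\<theta>\<in>{0..<2*pi}. cmod (symb k c \<theta> / symb k a \<theta>) \<le> sigE"
                "\<exists>\<theta>\<in>{0..<2*pi}. cmod (symb k c \<theta> / symb k a \<theta>) = sigE"
    and lamI_min: "\<forall>\<theta>\<in>{0..<2*pi}. lamI \<le> Re (symb (k + 1) b \<theta> / symb k a \<theta>)"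
                "\<exists>\<theta>\<in>{0..<2*pi}. Re (symb (k + 1) b \<theta> / symb k a \<theta>) = lamI"
    and consts_pos: "sigF > 0" "sigE > 0" "lamI > 0"
  shows "(\<forall>n\<ge>1. \<forall>Ainv \<in> carrier_mat n n. Ainv * toeplitz_L n a = 1\<^sub>m n \<longrightarrow>
            spectral_norm Ainv \<le> sigF
          \<and> spectral_norm (Ainv * toeplitz_L n c) \<le> sigE
          \<and> (\<forall>\<mu>. eigenvalue ((1/2) \<cdot>\<^sub>m (Ainv * toeplitz_L n b + transpose_mat (Ainv * toeplitz_L n b))) \<mu>
                 \<longrightarrow> lamI \<le> \<mu>))
       \<and> (\<forall>(v::nat \<Rightarrow> real) (u::nat \<Rightarrow> real) n. n \<ge> 1 \<longrightarrow>
            (\<Sum>i=1..n. \<Sum>j=1..i. hat_kernel a b (i - j) * v j * v i) \<ge> lamI * (\<Sum>i=1..n. \<bar>v i\<bar>^2)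
          \<and> (\<Sum>i=1..n. \<Sum>j=1..i. doc a (i - j) * v j * u i)
               \<le> sigF * sqrt (\<Sum>i=1..n. \<bar>v i\<bar>^2) * sqrt (\<Sum>i=1..n. \<bar>u i\<bar>^2)
          \<and> (\<Sum>i=1..n. \<Sum>j=1..i. hat_kernel a c (i - j) * v j * u i)
               \<le> sigE * sqrt (\<Sum>i=1..n. \<bar>v i\<bar>^2) * sqrt (\<Sum>i=1..n. \<bar>u i\<bar>^2))"
proof -
  have a0: "a 0 \<noteq> 0"
    using pos(1) by simp
  have no_roots: "\<And>z. cmod z \<le> 1 \<Longrightarrow> poly (symb_poly k a) z \<noteq> 0"
    using k a0 zs a_nz by (intro symb_poly_nonzero_in_closed_disc) (auto simp: zero_stable_def)
  \<comment> \<open>doc a is the hat kernel of the unit impulse, whose symbol is 1\<close>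
  have F: "toeplitz_form (doc a) n v u \<le> sigF * L2_set v {..<n} * L2_set u {..<n}" for n v u
    using toeplitz_form_hat_kernel_le[where K = 1 and p = "\<lambda>j. of_bool (j = 0)", OF a0 a_ext _ no_roots]
      sigF_max(1) by (simp add: hat_kernel_unit symb_unit)
  have E: "toeplitz_form (hat_kernel a c) n v u \<le> sigE * L2_set v {..<n} * L2_set u {..<n}" for n v u
    using toeplitz_form_hat_kernel_le[where k = k and K = k, OF a0 a_ext c_ext no_roots sigE_max(1)] .
  have I: "lamI * (\<Sum>i<n. (v i)\<^sup>2) \<le> toeplitz_form (hat_kernel a b) n v v" for n v
    using toeplitz_form_hat_kernel_ge[where k = k and K = "k + 1", OF a0 a_ext b_ext no_roots lamI_min(1)] .
  show ?thesis
  proof (intro conjI allI impI ballI)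
    fix n Ainv assume "n \<ge> 1" and "Ainv \<in> carrier_mat n n" and "Ainv * toeplitz_L n a = 1\<^sub>m n"
    then have Ainv: "Ainv = toeplitz_L n (doc a)"
      using a0 by (intro left_inverse_toeplitz_L_eq_doc)
    show "spectral_norm Ainv \<le> sigF"
      unfolding Ainv using \<open>n \<ge> 1\<close> consts_pos(1) F by (intro spectral_norm_toeplitz_L_le) auto
    show "spectral_norm (Ainv * toeplitz_L n c) \<le> sigE"
      unfolding Ainv toeplitz_L_doc_mult using \<open>n \<ge> 1\<close> consts_pos(2) E
      by (intro spectral_norm_toeplitz_L_le) auto
    show "lamI \<le> \<mu>"
      if "eigenvalue ((1/2) \<cdot>\<^sub>m (Ainv * toeplitz_L n b + transpose_mat (Ainv * toeplitz_L n b))) \<mu>" for \<mu>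
      using I that unfolding Ainv toeplitz_L_doc_mult by (rule eigenvalue_toeplitz_L_sym_part_ge)
  qed (simp_all only: sum_atLeast1_eq_toeplitz_form sum_atLeast1_abs_power2 I F[unfolded L2_set_def]
      E[unfolded L2_set_def])
qed

end
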